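(* Let $p\in[1,2]$ and $p^*=\frac{p}{p-1}$ ($p^*=\infty$ if $p=1$). Then for all $n\in\mathbb{N}$ and all real $a_1,\dots,a_n$, \[ \left(\sum_{j=1}^n|a_j|^2\right)^{1/2}\le D_{p^*,\infty}\left(\int_0^1\left|\sum_{j=1}^n a_jr_j(t)\right|^p dt\right)^{1/p}; \] consequently $\mathrm{A}_p\le D_{p^*,\infty}$.
   Context: Scalars are real. $X_q=\ell_q$ for $1\le q<\infty$, $X_\infty=c_0$, $(e_k)$ canonical unit vectors, $\|T\|$ the sup of $|T(x,y)|$ over unit balls. Rademacher functions: $r_j(t)=\operatorname{sign}(\sin(2^j\pi t))$ on $[0,1]$. For $0<r<\infty$, $\mathrm{A}_r$ is the optimal constant in the Khintchine inequality $\left(\sum_{j=1}^n|a_j|^2\right)^{1/2}\le \mathrm{A}_r\left(\int_0^1|\sum_{j=1}^n a_jr_j(t)|^rdt\right)^{1/r}$ (for all $n$ and real $a_j$). For $q\in[2,\infty]$, $D_{q,\infty}$ denotes the optimal constant $D$ such that $\left(\sum_{j}\left(\sum_{i}|T(e_i,e_j)|^{\frac{q}{q-1}}\right)^{2\frac{q-1}{q}}\right)^{1/2}\le D\|T\|$ for all continuous bilinear $T:X_q\times X_\infty\to\mathbb{R}$ (exponent $q/(q-1)$ read as $1$ when $q=\infty$). *)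

theory Defs
  imports "HOL-Analysis.Analysis"
begin

definition Xsp :: "ereal \<Rightarrow> (nat \<Rightarrow> real) set" where
  "Xsp q = (if q = \<infinity> then {x. x \<longlonglongrightarrow> 0}
            else {x. summable (\<lambda>i. \<bar>x i\<bar> powr real_of_ereal q)})"

definition Xnorm :: "ereal \<Rightarrow> (nat \<Rightarrow> real) \<Rightarrow> real" where
  "Xnorm q x = (if q = \<infinity> then (SUP i. \<bar>x i\<bar>)
               else (\<Sum>i. \<bar>x i\<bar> powr real_of_ereal q) powr (1 / real_of_ereal q))"

definition ecan :: "nat \<Rightarrow> nat \<Rightarrow> real" where
  "ecan k = (\<lambda>i. if i = k then 1 else 0)"

definition bilinear_on :: "(nat \<Rightarrow> real) set \<Rightarrow> (nat \<Rightarrow> real) set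
    \<Rightarrow> ((nat \<Rightarrow> real) \<Rightarrow> (nat \<Rightarrow> real) \<Rightarrow> real) \<Rightarrow> bool" where
  "bilinear_on X Y T \<longleftrightarrow>
     (\<forall>x\<in>X. \<forall>x'\<in>X. \<forall>y\<in>Y. \<forall>c::real.
        T (\<lambda>i. x i + x' i) y = T x y + T x' y \<and> T (\<lambda>i. c * x i) y = c * T x y) \<and>
     (\<forall>x\<in>X. \<forall>y\<in>Y. \<forall>y'\<in>Y. \<forall>c::real.
        T x (\<lambda>i. y i + y' i) = T x y + T x y' \<and> T x (\<lambda>i. c * y i) = c * T x y)"

text \<open>Continuous bilinear form T : X_q \<times> X_\<infinity> \<rightarrow> R (continuity of a bilinear map = boundedness).\<close>
definition cont_bilinear :: "ereal \<Rightarrow> ((nat \<Rightarrow> real) \<Rightarrow> (nat \<Rightarrow> real) \<Rightarrow> real) \<Rightarrow> bool" where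
  "cont_bilinear q T \<longleftrightarrow> bilinear_on (Xsp q) (Xsp \<infinity>) T \<and>
     (\<exists>C. \<forall>x\<in>Xsp q. \<forall>y\<in>Xsp \<infinity>. \<bar>T x y\<bar> \<le> C * Xnorm q x * Xnorm \<infinity> y)"

definition bnorm :: "ereal \<Rightarrow> ((nat \<Rightarrow> real) \<Rightarrow> (nat \<Rightarrow> real) \<Rightarrow> real) \<Rightarrow> real" where
  "bnorm q T = (SUP xy \<in> {(x, y). x \<in> Xsp q \<and> y \<in> Xsp \<infinity> \<and> Xnorm q x \<le> 1 \<and> Xnorm \<infinity> y \<le> 1}.
                  \<bar>T (fst xy) (snd xy)\<bar>)"

definition conj_exp :: "ereal \<Rightarrow> real" where
  "conj_exp q = (if q = \<infinity> then 1 else real_of_ereal q / (real_of_ereal q - 1))"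

text \<open>Truncation (indices i, j < N) of the mixed sum
  (\<Sum>_j (\<Sum>_i |T(e_i,e_j)|^{q'})^{2/q'})^{1/2}; the full (possibly infinite) mixed sum is the
  supremum over N of these truncations, so "\<le> D\<parallel>T\<parallel>" for the full sum is equivalent to it for all N.\<close>
definition mixed_sum_trunc :: "ereal \<Rightarrow> ((nat \<Rightarrow> real) \<Rightarrow> (nat \<Rightarrow> real) \<Rightarrow> real) \<Rightarrow> nat \<Rightarrow> real" where
  "mixed_sum_trunc q T N =
     (\<Sum>j<N. (\<Sum>i<N. \<bar>T (ecan i) (ecan j)\<bar> powr conj_exp q) powr (2 / conj_exp q)) powr (1/2)"

definition D_const :: "ereal \<Rightarrow> real" where
  "D_const q = Inf {D. \<forall>T. cont_bilinear q T \<longrightarrow> (\<forall>N. mixed_sum_trunc q T N \<le> D * bnorm q T)}"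

definition rademacher :: "nat \<Rightarrow> real \<Rightarrow> real" where
  "rademacher j t = sgn (sin (2 ^ j * pi * t))"

definition khintchine_A :: "real \<Rightarrow> real" where
  "khintchine_A r = Inf {A. \<forall>(n::nat) (a::nat \<Rightarrow> real).
      (\<Sum>j=1..n. \<bar>a j\<bar>^2) powr (1/2)
        \<le> A * (integral {0..1} (\<lambda>t. \<bar>\<Sum>j=1..n. a j * rademacher j t\<bar> powr r)) powr (1/r)}"

definition pstar :: "real \<Rightarrow> ereal" where
  "pstar p = (if p = 1 then \<infinity> else ereal (p / (p - 1)))"

end

theory Submission
  imports Defs
begin

text \<open>
  For \<open>b \<in> \<real>\<^sup>n\<close> let \<open>T(x, y) = 2\<^sup>-\<^sup>n\<^sup>/\<^sup>p \<Sum>\<^sub>k \<Sum>\<^sub>j b\<^sub>j \<epsilon>\<^sub>k(j) x\<^sub>k y\<^sub>j\<close>, where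
  \<open>\<epsilon>\<^sub>1, \<dots>, \<epsilon>\<^sub>2\<^sub>^\<^sub>n\<close> run through the sign vectors in \<open>{-1, 1}\<^sup>n\<close>. The mixed sum of \<open>T\<close> is
  \<open>\<parallel>b\<parallel>\<^sub>2\<close>, and Hoelder's inequality together with the contraction principle bounds its norm by
  \<open>(\<bbbE> \<bar>\<Sum>\<^sub>j b\<^sub>j \<epsilon>(j)\<bar>\<^sup>p)\<^sup>1\<^sup>/\<^sup>p\<close>. So \<open>\<parallel>b\<parallel>\<^sub>2 \<le> D (\<bbbE> \<bar>\<Sum>\<^sub>j b\<^sub>j \<epsilon>(j)\<bar>\<^sup>p)\<^sup>1\<^sup>/\<^sup>p\<close> for every admissible
  constant \<open>D\<close>, and this expectation is the integral in the theorem because \<open>r\<^sub>1, \<dots>, r\<^sub>n\<close> are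
  distributed like independent signs.

  Passing to the infimum \<open>D\<^sub>p\<^sub>*\<^sub>,\<^sub>\<infinity>\<close> requires an admissible constant to exist, and \<open>\<surd>3\<close> is one.
  Testing \<open>T\<close> against sign vectors and averaging, Khintchine's inequality with constant \<open>\<surd>3\<close>
  (obtained from the second and fourth moments) bounds \<open>\<Sum>\<^sub>i (\<Sum>\<^sub>j T(e\<^sub>i, e\<^sub>j)\<^sup>2)\<^sup>p\<^sup>/\<^sup>2\<close> by
  \<open>(\<surd>3 \<parallel>T\<parallel>)\<^sup>p\<close>, and Minkowski's inequality with exponent \<open>2/p \<ge> 1\<close> turns this into the bound on
  the mixed sum.
\<close>

section \<open>Averages over random signs\<close>

definition sign_vec :: "nat \<Rightarrow> nat \<Rightarrow> real" where
  "sign_vec k j = (if odd (k div 2 ^ j) then -1 else 1)"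

definition sign_cons :: "real \<Rightarrow> (nat \<Rightarrow> real) \<Rightarrow> nat \<Rightarrow> real" where
  "sign_cons s e j = (if j = 0 then s else e (j - 1))"

text \<open>The sign vectors \<open>sign_vec k\<close>, \<open>k < 2^n\<close>, restricted to the first \<open>n\<close> coordinates enumerate
  \<open>{-1,1}^n\<close>, so \<open>sign_avg n G\<close> is the expectation of \<open>G\<close> at \<open>n\<close> independent symmetric signs
  (when \<open>G e\<close> depends only on \<open>e 0, \<dots>, e (n - 1)\<close>).\<close>
definition sign_avg :: "nat \<Rightarrow> ((nat \<Rightarrow> real) \<Rightarrow> real) \<Rightarrow> real" where
  "sign_avg n G = (\<Sum>k<2 ^ n. G (sign_vec k)) / 2 ^ n"

lemma sign_vec_double: "sign_vec (2 * k) = sign_cons 1 (sign_vec k)"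
  and sign_vec_double_Suc: "sign_vec (2 * k + 1) = sign_cons (-1) (sign_vec k)"
  by (auto simp: fun_eq_iff sign_vec_def sign_cons_def div_mult2_eq gr0_conv_Suc)

lemma abs_sign_vec [simp]: "\<bar>sign_vec k j\<bar> = 1"
  by (simp add: sign_vec_def)

lemma sign_avg_0: "sign_avg 0 G = G (\<lambda>j. 1)"
  by (simp add: sign_avg_def sign_vec_def[abs_def])

lemma sign_avg_Suc:
  "sign_avg (Suc n) G = (sign_avg n (\<lambda>e. G (sign_cons 1 e)) + sign_avg n (\<lambda>e. G (sign_cons (-1) e))) / 2"
proof -
  have "(\<Sum>k<2 * M. G (sign_vec k)) = (\<Sum>k<M. G (sign_vec (2 * k)) + G (sign_vec (2 * k + 1)))" for M
    by (induction M) auto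
  from this[of "2 ^ n"] have "(\<Sum>k<2 ^ Suc n. G (sign_vec k))
      = (\<Sum>k<2 ^ n. G (sign_cons 1 (sign_vec k))) + (\<Sum>k<2 ^ n. G (sign_cons (-1) (sign_vec k)))"
    by (simp add: sign_vec_double sign_vec_double_Suc[simplified] sum.distrib)
  then show ?thesis
    by (simp add: sign_avg_def field_simps)
qed

lemma sum_lessThan_Suc_sign_cons:
  "(\<Sum>j<Suc n. b j * sign_cons s e j) = b 0 * s + (\<Sum>j<n. b (Suc j) * e j)"
  by (subst sum.lessThan_Suc_shift) (simp add: sign_cons_def)

lemma sign_avg_add: "sign_avg n (\<lambda>e. f e + g e) = sign_avg n f + sign_avg n g"
  by (simp add: sign_avg_def sum.distrib add_divide_distrib)

lemma sign_avg_const: "sign_avg n (\<lambda>e. c) = c"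
  by (simp add: sign_avg_def)

lemma sign_avg_sum: "finite I \<Longrightarrow> sign_avg n (\<lambda>e. \<Sum>i\<in>I. f i e) = (\<Sum>i\<in>I. sign_avg n (f i))"
  by (induction I rule: finite_induct) (auto simp: sign_avg_add sign_avg_const)

lemma sign_avg_mono: "(\<And>k. f (sign_vec k) \<le> g (sign_vec k)) \<Longrightarrow> sign_avg n f \<le> sign_avg n g"
  unfolding sign_avg_def by (intro divide_right_mono sum_mono) auto

lemma sign_avg_nonneg: "(\<And>e. f e \<ge> 0) \<Longrightarrow> sign_avg n f \<ge> 0"
  unfolding sign_avg_def by (intro divide_nonneg_pos sum_nonneg) auto

lemma sign_avg_convex_le:
  assumes "convex_on UNIV F"
  shows "F (sign_avg n f) \<le> sign_avg n (\<lambda>e. F (f e))"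
proof -
  have "F (\<Sum>k<2 ^ n. (1 / 2 ^ n) *\<^sub>R f (sign_vec k)) \<le> (\<Sum>k<2 ^ n. (1 / 2 ^ n) * F (f (sign_vec k)))"
    by (rule convex_on_sum[OF _ _ assms]) (auto simp: lessThan_empty_iff)
  then show ?thesis
    by (simp add: sign_avg_def sum_divide_distrib)
qed

lemma sign_avg_Cauchy_Schwarz:
  "(sign_avg n (\<lambda>e. f e * g e))\<^sup>2 \<le> sign_avg n (\<lambda>e. (f e)\<^sup>2) * sign_avg n (\<lambda>e. (g e)\<^sup>2)"
proof -
  define w :: real where "w = sqrt (2 ^ n)"
  have w: "w > 0" "w\<^sup>2 = 2 ^ n" unfolding w_def by auto
  have "(\<Sum>k<2 ^ n. (f (sign_vec k) / w) * (g (sign_vec k) / w))\<^sup>2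
        \<le> (\<Sum>k<2 ^ n. (f (sign_vec k) / w)\<^sup>2) * (\<Sum>k<2 ^ n. (g (sign_vec k) / w)\<^sup>2)"
    by (rule Cauchy_Schwarz_ineq_sum)
  with w show ?thesis
    by (simp add: sign_avg_def sum_divide_distrib power_divide power2_eq_square)
qed

lemma sign_avg_square:
  "sign_avg n (\<lambda>e. (c + (\<Sum>j<n. b j * e j))\<^sup>2) = c\<^sup>2 + (\<Sum>j<n. (b j)\<^sup>2)"
proof (induction n arbitrary: b c)
  case 0
  then show ?case by (simp add: sign_avg_0)
next
  case (Suc n)
  have "sign_avg (Suc n) (\<lambda>e. (c + (\<Sum>j<Suc n. b j * e j))\<^sup>2)
     = (sign_avg n (\<lambda>e. ((c + b 0) + (\<Sum>j<n. b (Suc j) * e j))\<^sup>2)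
        + sign_avg n (\<lambda>e. ((c - b 0) + (\<Sum>j<n. b (Suc j) * e j))\<^sup>2)) / 2"
    unfolding sign_avg_Suc sum_lessThan_Suc_sign_cons by (simp add: algebra_simps)
  also have "\<dots> = c\<^sup>2 + (\<Sum>j<Suc n. (b j)\<^sup>2)"
    by (simp only: Suc.IH)
      (simp add: sum.lessThan_Suc_shift power2_eq_square algebra_simps del: sum.lessThan_Suc)
  finally show ?case .
qed

lemma sign_avg_fourth_power_le:
  "sign_avg n (\<lambda>e. (c + (\<Sum>j<n. b j * e j)) ^ 4)
     \<le> c ^ 4 + 6 * c\<^sup>2 * (\<Sum>j<n. (b j)\<^sup>2) + 3 * (\<Sum>j<n. (b j)\<^sup>2)\<^sup>2"
proof (induction n arbitrary: b c)
  case 0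
  then show ?case by (simp add: sign_avg_0)
next
  case (Suc n)
  define s where "s = (\<Sum>j<n. (b (Suc j))\<^sup>2)"
  have "sign_avg (Suc n) (\<lambda>e. (c + (\<Sum>j<Suc n. b j * e j)) ^ 4)
     = (sign_avg n (\<lambda>e. ((c + b 0) + (\<Sum>j<n. b (Suc j) * e j)) ^ 4)
        + sign_avg n (\<lambda>e. ((c - b 0) + (\<Sum>j<n. b (Suc j) * e j)) ^ 4)) / 2"
    unfolding sign_avg_Suc sum_lessThan_Suc_sign_cons by (simp add: algebra_simps)
  also have "\<dots> \<le> ((c + b 0) ^ 4 + 6 * (c + b 0)\<^sup>2 * s + 3 * s\<^sup>2
                  + ((c - b 0) ^ 4 + 6 * (c - b 0)\<^sup>2 * s + 3 * s\<^sup>2)) / 2"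
    using Suc.IH[where b="\<lambda>j. b (Suc j)" and c="c + b 0"] Suc.IH[where b="\<lambda>j. b (Suc j)" and c="c - b 0"]
    unfolding s_def by (intro divide_right_mono add_mono) auto
  also have "\<dots> \<le> c ^ 4 + 6 * c\<^sup>2 * ((b 0)\<^sup>2 + s) + 3 * ((b 0)\<^sup>2 + s)\<^sup>2"
  proof -
    have "0 \<le> 2 * (b 0) ^ 4"
      by simp
    then show ?thesis
      by (simp add: power2_eq_square power4_eq_xxxx algebra_simps)
  qed
  also have "(b 0)\<^sup>2 + s = (\<Sum>j<Suc n. (b j)\<^sup>2)"
    unfolding s_def by (simp add: sum.lessThan_Suc_shift del: sum.lessThan_Suc)
  finally show ?case .
qed

text \<open>Cauchy--Schwarz, applied to \<open>\<bbbE> S\<^sup>2 = \<bbbE> (\<bar>S\<bar>\<^sup>1\<^sup>/\<^sup>2 \<bar>S\<bar>\<^sup>3\<^sup>/\<^sup>2)\<close> and to \<open>\<bbbE> \<bar>S\<bar>\<^sup>3 = \<bbbE> (\<bar>S\<bar> S\<^sup>2)\<close>.\<close>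
lemma sign_avg_moment_interpolation:
  "(sign_avg n (\<lambda>e. (S e)\<^sup>2)) ^ 4
     \<le> (sign_avg n (\<lambda>e. \<bar>S e\<bar>))\<^sup>2 * sign_avg n (\<lambda>e. (S e)\<^sup>2) * sign_avg n (\<lambda>e. (S e) ^ 4)"
proof -
  define m1 m2 m3 m4 where "m1 = sign_avg n (\<lambda>e. \<bar>S e\<bar>)" and "m2 = sign_avg n (\<lambda>e. (S e)\<^sup>2)"
    and "m3 = sign_avg n (\<lambda>e. \<bar>S e\<bar> * (S e)\<^sup>2)" and "m4 = sign_avg n (\<lambda>e. (S e) ^ 4)"
  have "(\<lambda>e. sqrt \<bar>S e\<bar> * (sqrt \<bar>S e\<bar> * \<bar>S e\<bar>)) = (\<lambda>e. (S e)\<^sup>2)"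
    by (auto simp: power2_eq_square simp flip: mult.assoc)
  then have "m2\<^sup>2 \<le> m1 * m3"
    using sign_avg_Cauchy_Schwarz[of n "\<lambda>e. sqrt \<bar>S e\<bar>" "\<lambda>e. sqrt \<bar>S e\<bar> * \<bar>S e\<bar>"]
    by (simp add: m1_def m2_def m3_def power_mult_distrib)
  moreover have "m3\<^sup>2 \<le> m2 * m4"
    using sign_avg_Cauchy_Schwarz[of n "\<lambda>e. \<bar>S e\<bar>" "\<lambda>e. (S e)\<^sup>2"]
    by (simp add: m2_def m3_def m4_def flip: power_mult)
  moreover have "m1 \<ge> 0" "m3 \<ge> 0"
    unfolding m1_def m3_def by (auto intro: sign_avg_nonneg)
  ultimately have "(m2\<^sup>2)\<^sup>2 \<le> (m1 * m3)\<^sup>2"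
    by (intro power_mono) auto
  also have "\<dots> = m1\<^sup>2 * m3\<^sup>2"
    by (simp add: power_mult_distrib)
  also have "\<dots> \<le> m1\<^sup>2 * (m2 * m4)"
    using \<open>m3\<^sup>2 \<le> m2 * m4\<close> by (intro mult_left_mono) auto
  finally show ?thesis
    by (simp add: m1_def m2_def m4_def mult.assoc flip: power_mult)
qed

lemma khintchine_L1:
  "sqrt (\<Sum>j<n. (b j)\<^sup>2) \<le> sqrt 3 * sign_avg n (\<lambda>e. \<bar>\<Sum>j<n. b j * e j\<bar>)"
proof -
  define \<sigma> m where "\<sigma> = sqrt (\<Sum>j<n. (b j)\<^sup>2)" and "m = sign_avg n (\<lambda>e. \<bar>\<Sum>j<n. b j * e j\<bar>)"
  have \<sigma>: "\<sigma> \<ge> 0" "\<sigma>\<^sup>2 = (\<Sum>j<n. (b j)\<^sup>2)"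
    unfolding \<sigma>_def by (simp_all add: sum_nonneg)
  have m: "m \<ge> 0"
    unfolding m_def by (rule sign_avg_nonneg) simp
  have "\<sigma> ^ 6 * \<sigma>\<^sup>2 = (\<sigma>\<^sup>2) ^ 4"
    by algebra
  also have "\<dots> \<le> m\<^sup>2 * \<sigma>\<^sup>2 * sign_avg n (\<lambda>e. (\<Sum>j<n. b j * e j) ^ 4)"
    using sign_avg_moment_interpolation[of n "\<lambda>e. \<Sum>j<n. b j * e j"] sign_avg_square[of n 0 b]
    unfolding m_def \<sigma>(2) by simp
  also have "\<dots> \<le> m\<^sup>2 * \<sigma>\<^sup>2 * (3 * (\<sigma>\<^sup>2)\<^sup>2)"
    using sign_avg_fourth_power_le[of n 0 b] unfolding \<sigma>(2) by (intro mult_left_mono) (auto simp: sum_nonneg)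
  also have "\<dots> = \<sigma> ^ 6 * (3 * m\<^sup>2)"
    by algebra
  finally have moments: "\<sigma> ^ 6 * \<sigma>\<^sup>2 \<le> \<sigma> ^ 6 * (3 * m\<^sup>2)" .
  have "\<sigma>\<^sup>2 \<le> 3 * m\<^sup>2"
  proof (cases "\<sigma> = 0")
    case True
    then show ?thesis
      by simp
  next
    case False
    with \<sigma>(1) have "\<sigma> ^ 6 > 0"
      by simp
    then show ?thesis
      using moments by (rule mult_le_cancel_left_pos[THEN iffD1])
  qed
  then have "\<sigma>\<^sup>2 \<le> (sqrt 3 * m)\<^sup>2"
    by (simp add: power_mult_distrib)
  then have "\<sigma> \<le> sqrt 3 * m"
    by (rule power2_le_imp_le) (use m in simp)
  then show ?thesis
    by (simp only: \<sigma>_def m_def)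
qed

lemma powr_convex_combination_le:
  fixes a b u v p :: real
  assumes "p \<ge> 1" "a \<ge> 0" "b \<ge> 0" "u \<ge> 0" "v \<ge> 0" "u + v = 1"
  shows "(u * a + v * b) powr p \<le> u * a powr p + v * b powr p"
proof -
  have single: "(w * c) powr p \<le> w * c powr p" if "0 \<le> w" "w \<le> 1" "0 \<le> c" for w c :: real
  proof -
    have "(w * c) powr p = w powr p * c powr p"
      using that by (simp add: powr_mult)
    also have "\<dots> \<le> w powr 1 * c powr p"
      using that assms(1) by (intro mult_right_mono powr_mono') auto
    finally show ?thesis
      using that by simp
  qed
  consider "a = 0" | "b = 0" | "a > 0" "b > 0"
    using assms by linarith
  then show ?thesis
  proof cases
    case 1
    then show ?thesis using single[of v b] assms by simp
  next
    case 2
    then show ?thesis using single[of u a] assms by simp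
  next
    case 3
    have "(\<lambda>x. x powr p) ((1 - v) *\<^sub>R a + v *\<^sub>R b) \<le> (1 - v) * a powr p + v * b powr p"
      using 3 assms by (intro convex_onD[OF powr_convex]) auto
    moreover have "u = 1 - v"
      using assms by simp
    ultimately show ?thesis
      by simp
  qed
qed

lemma convex_on_abs_powr:
  fixes p :: real
  assumes "p \<ge> 1"
  shows "convex_on UNIV (\<lambda>x::real. \<bar>x\<bar> powr p)"
  unfolding convex_on_def
proof (intro conjI ballI allI impI)
  fix x y u v :: real
  assume uv: "0 \<le> u" "0 \<le> v" "u + v = 1"
  have "\<bar>u *\<^sub>R x + v *\<^sub>R y\<bar> powr p \<le> (u * \<bar>x\<bar> + v * \<bar>y\<bar>) powr p"
    using uv assms by (intro powr_mono2) (auto simp: abs_triangle_ineq[THEN order_trans] abs_mult)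
  also have "\<dots> \<le> u * \<bar>x\<bar> powr p + v * \<bar>y\<bar> powr p"
    using uv assms by (intro powr_convex_combination_le) auto
  finally show "\<bar>u *\<^sub>R x + v *\<^sub>R y\<bar> powr p \<le> u * \<bar>x\<bar> powr p + v * \<bar>y\<bar> powr p" .
qed simp

lemma khintchine_Lp:
  fixes p :: real
  assumes "p \<ge> 1"
  shows "(\<Sum>j<n. (b j)\<^sup>2) powr (p / 2) \<le> sqrt 3 powr p * sign_avg n (\<lambda>e. \<bar>\<Sum>j<n. b j * e j\<bar> powr p)"
proof -
  define m where "m = sign_avg n (\<lambda>e. \<bar>\<Sum>j<n. b j * e j\<bar>)"
  have m: "m \<ge> 0"
    unfolding m_def by (rule sign_avg_nonneg) simp
  have "(\<Sum>j<n. (b j)\<^sup>2) powr (p / 2) = sqrt (\<Sum>j<n. (b j)\<^sup>2) powr p"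
    by (simp add: sum_nonneg powr_half_sqrt[symmetric] powr_powr)
  also have "\<dots> \<le> (sqrt 3 * m) powr p"
    unfolding m_def using assms by (intro powr_mono2 khintchine_L1) (auto simp: sum_nonneg)
  also have "\<dots> = sqrt 3 powr p * \<bar>m\<bar> powr p"
    using m by (simp add: powr_mult)
  also have "\<bar>m\<bar> powr p \<le> sign_avg n (\<lambda>e. \<bar>\<Sum>j<n. b j * e j\<bar> powr p)"
    using sign_avg_convex_le[OF convex_on_abs_powr[OF assms], of n "\<lambda>e. \<bar>\<Sum>j<n. b j * e j\<bar>"]
    unfolding m_def by simp
  finally show ?thesis
    by (simp add: mult_left_mono)
qed

lemma convex_on_symmetric_pair_le:
  fixes F :: "real \<Rightarrow> real"
  assumes F: "convex_on UNIV F" and y: "\<bar>y\<bar> \<le> 1"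
  shows "F (z + t * y) + F (z - t * y) \<le> F (z + t) + F (z - t)"
proof -
  define l where "l = (1 + y) / 2"
  have l: "0 \<le> l" "l \<le> 1"
    using y unfolding l_def by auto
  have "F ((1 - l) *\<^sub>R (z - t) + l *\<^sub>R (z + t)) \<le> (1 - l) * F (z - t) + l * F (z + t)"
    and "F ((1 - l) *\<^sub>R (z + t) + l *\<^sub>R (z - t)) \<le> (1 - l) * F (z + t) + l * F (z - t)"
    using l by (intro convex_onD[OF F]; simp)+
  moreover have "(1 - l) *\<^sub>R (z - t) + l *\<^sub>R (z + t) = z + t * y"
    and "(1 - l) *\<^sub>R (z + t) + l *\<^sub>R (z - t) = z - t * y"
    unfolding l_def by (simp_all add: algebra_simps add_divide_distrib diff_divide_distrib)
  ultimately show ?thesis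
    by (simp add: algebra_simps)
qed

text \<open>The factors \<open>y j\<close> are removed one at a time, averaging over the sign \<open>e j\<close>.\<close>
lemma sign_avg_contraction:
  fixes F :: "real \<Rightarrow> real"
  assumes F: "convex_on UNIV F" and y: "\<forall>j<n. \<bar>y j\<bar> \<le> 1"
  shows "sign_avg n (\<lambda>e. F (c + (\<Sum>j<n. a j * y j * e j))) \<le> sign_avg n (\<lambda>e. F (c + (\<Sum>j<n. a j * e j)))"
  using y
proof (induction n arbitrary: a y c)
  case 0
  then show ?case by simp
next
  case (Suc n)
  define R where "R e = (\<Sum>j<n. a (Suc j) * e j)" for e
  define Ry where "Ry e = (\<Sum>j<n. a (Suc j) * y (Suc j) * e j)" for e
  have "sign_avg (Suc n) (\<lambda>e. F (c + (\<Sum>j<Suc n. a j * y j * e j)))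
     = (sign_avg n (\<lambda>e. F ((c + a 0 * y 0) + Ry e)) + sign_avg n (\<lambda>e. F ((c - a 0 * y 0) + Ry e))) / 2"
    unfolding sign_avg_Suc sum_lessThan_Suc_sign_cons Ry_def by (simp add: algebra_simps)
  also have "\<dots> \<le> (sign_avg n (\<lambda>e. F ((c + a 0 * y 0) + R e)) + sign_avg n (\<lambda>e. F ((c - a 0 * y 0) + R e))) / 2"
    using Suc.IH[where a="\<lambda>j. a (Suc j)" and y="\<lambda>j. y (Suc j)" and c="c + a 0 * y 0"]
      Suc.IH[where a="\<lambda>j. a (Suc j)" and y="\<lambda>j. y (Suc j)" and c="c - a 0 * y 0"] Suc.prems
    unfolding R_def Ry_def by (intro divide_right_mono add_mono) auto
  also have "\<dots> \<le> (sign_avg n (\<lambda>e. F ((c + a 0) + R e)) + sign_avg n (\<lambda>e. F ((c - a 0) + R e))) / 2"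
  proof -
    have y0: "\<bar>y 0\<bar> \<le> 1"
      using Suc.prems by auto
    have "sign_avg n (\<lambda>e. F ((c + a 0 * y 0) + R e) + F ((c - a 0 * y 0) + R e))
        \<le> sign_avg n (\<lambda>e. F ((c + a 0) + R e) + F ((c - a 0) + R e))"
    proof (rule sign_avg_mono)
      fix k
      show "F ((c + a 0 * y 0) + R (sign_vec k)) + F ((c - a 0 * y 0) + R (sign_vec k))
          \<le> F ((c + a 0) + R (sign_vec k)) + F ((c - a 0) + R (sign_vec k))"
        using convex_on_symmetric_pair_le[OF F y0, of "c + R (sign_vec k)" "a 0"]
        by (simp add: algebra_simps)
    qed
    then show ?thesis
      by (simp add: sign_avg_add)
  qed
  also have "\<dots> = sign_avg (Suc n) (\<lambda>e. F (c + (\<Sum>j<Suc n. a j * e j)))"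
    unfolding sign_avg_Suc sum_lessThan_Suc_sign_cons R_def by (simp add: algebra_simps)
  finally show ?case .
qed

section \<open>Rademacher functions\<close>

lemma rademacher_Suc: "rademacher (Suc k) t = rademacher k (2 * t)"
  unfolding rademacher_def by (simp add: mult_ac)

lemma rademacher_Suc_add_1: "rademacher (Suc k) (t + 1) = rademacher (Suc k) t"
proof -
  have periodic: "sin (x + 2 * real m * pi) = sin x" for x m
    by (simp add: sin_add)
  have "2 ^ Suc k * pi * (t + 1) = 2 ^ Suc k * pi * t + 2 * real (2 ^ k) * pi"
    by (simp add: algebra_simps)
  then show ?thesis
    unfolding rademacher_def by (simp only: periodic)
qed

lemma rademacher_1_first_half: "0 < t \<Longrightarrow> t < 1/2 \<Longrightarrow> rademacher 1 t = 1"
  unfolding rademacher_def by (simp add: sin_gt_zero)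

lemma rademacher_1_second_half: "1/2 < t \<Longrightarrow> t < 1 \<Longrightarrow> rademacher 1 t = -1"
  unfolding rademacher_def by (simp add: sin_lt_zero)

lemma has_integral_compress_halves:
  fixes h :: "real \<Rightarrow> real"
  assumes "(h has_integral I) {0..1}"
  shows "((\<lambda>t. h (2 * t)) has_integral I / 2) {0..1/2}"
    and "((\<lambda>t. h (2 * t - 1)) has_integral I / 2) {1/2..1}"
proof -
  have "((\<lambda>t. h (2 * t + 0)) has_integral (1 / \<bar>2\<bar>) *\<^sub>R I) ((\<lambda>t. t / 2 - 0 / 2) ` {0..1})"
    by (rule has_integral_affinity01[OF assms]) simp
  moreover have "(\<lambda>t::real. t / 2 - 0 / 2) ` {0..1} = {0..1/2}"
    by (simp add: image_affinity_atLeastAtMost_div_diff)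
  ultimately show "((\<lambda>t. h (2 * t)) has_integral I / 2) {0..1/2}"
    by simp
  have "((\<lambda>t. h (2 * t + -1)) has_integral (1 / \<bar>2\<bar>) *\<^sub>R I) ((\<lambda>t. t / 2 - -1 / 2) ` {0..1})"
    by (rule has_integral_affinity01[OF assms]) simp
  moreover have "(\<lambda>t::real. t / 2 - -1 / 2) ` {0..1} = {1/2..1}"
    using image_affinity_atLeastAtMost_div[of 2 "1/2" "0::real" 1] by simp
  ultimately show "((\<lambda>t. h (2 * t - 1)) has_integral I / 2) {1/2..1}"
    by simp
qed

text \<open>On \<open>[0, 1/2]\<close> and \<open>[1/2, 1]\<close> the first Rademacher function is constant, and the others are
  the Rademacher system on \<open>[0, 1]\<close> compressed to each half; this is the recursion of \<open>sign_avg_Suc\<close>.\<close>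
lemma has_integral_rademacher_sum:
  fixes F :: "real \<Rightarrow> real"
  shows "((\<lambda>t. F (c + (\<Sum>j<n. b j * rademacher (Suc j) t)))
          has_integral sign_avg n (\<lambda>e. F (c + (\<Sum>j<n. b j * e j)))) {0..1}"
proof (induction n arbitrary: b c)
  case 0
  show ?case
    using has_integral_const_real[of "F c" 0 1] by (simp add: sign_avg_0)
next
  case (Suc n)
  define R where "R t = (\<Sum>j<n. b (Suc j) * rademacher (Suc j) t)" for t
  define Ip where "Ip = sign_avg n (\<lambda>e. F ((c + b 0) + (\<Sum>j<n. b (Suc j) * e j)))"
  define Im where "Im = sign_avg n (\<lambda>e. F ((c - b 0) + (\<Sum>j<n. b (Suc j) * e j)))"
  define g where "g t = F (c + (\<Sum>j<Suc n. b j * rademacher (Suc j) t))" for t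
  have g_eq: "g t = F (c + b 0 * rademacher 1 t + R (2 * t))" for t
    unfolding g_def R_def by (subst sum.lessThan_Suc_shift) (simp add: rademacher_Suc[of "Suc _"] add.assoc)
  have "((\<lambda>t. F ((c + b 0) + R t)) has_integral Ip) {0..1}"
    unfolding R_def Ip_def by (rule Suc.IH)
  from has_integral_compress_halves(1)[OF this]
  have first: "(g has_integral Ip / 2) {0..1/2}"
  proof (rule has_integral_spike_finite[of "{0, 1/2}", rotated 2])
    fix t assume "t \<in> {0..1/2} - {0, 1/2::real}"
    then show "g t = F ((c + b 0) + R (2 * t))"
      using rademacher_1_first_half[of t] by (simp add: g_eq)
  qed simp
  have "((\<lambda>t. F ((c - b 0) + R t)) has_integral Im) {0..1}"
    unfolding R_def Im_def by (rule Suc.IH)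
  from has_integral_compress_halves(2)[OF this]
  have second: "(g has_integral Im / 2) {1/2..1}"
  proof (rule has_integral_spike_finite[of "{1/2, 1}", rotated 2])
    fix t assume "t \<in> {1/2..1} - {1/2, 1::real}"
    moreover have "R (2 * t - 1) = R (2 * t)"
      unfolding R_def using rademacher_Suc_add_1[of _ "2 * t - 1"] by simp
    ultimately show "g t = F ((c - b 0) + R (2 * t - 1))"
      using rademacher_1_second_half[of t] by (simp add: g_eq)
  qed simp
  have "(g has_integral (Ip / 2 + Im / 2)) {0..1}"
    by (rule has_integral_combine[OF _ _ first second]) auto
  moreover have "Ip / 2 + Im / 2 = sign_avg (Suc n) (\<lambda>e. F (c + (\<Sum>j<Suc n. b j * e j)))"
    unfolding Ip_def Im_def sign_avg_Suc sum_lessThan_Suc_sign_cons by (simp add: algebra_simps add_divide_distrib)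
  ultimately show ?case
    unfolding g_def by simp
qed

lemma integral_rademacher_sum_powr:
  "integral {0..1} (\<lambda>t. \<bar>\<Sum>j=1..n. a j * rademacher j t\<bar> powr p)
    = sign_avg n (\<lambda>e. \<bar>\<Sum>j<n. a (Suc j) * e j\<bar> powr p)"
proof -
  have "(\<Sum>j=1..n. a j * rademacher j t) = 0 + (\<Sum>j<n. a (Suc j) * rademacher (Suc j) t)" for t
    using sum.atLeast1_atMost_eq[of "\<lambda>j. a j * rademacher j t" n] by simp
  then show ?thesis
    using has_integral_rademacher_sum[where F="\<lambda>x. \<bar>x\<bar> powr p" and c=0 and b="\<lambda>j. a (Suc j)"]
    by (simp add: integral_unique)
qed

section \<open>Inequalities for finite sums\<close>

lemma Holder_sum_le:
  fixes p q :: real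
  assumes p: "p > 1" and q: "q > 1" and pq: "1/p + 1/q = 1" and I: "finite I"
    and x: "(\<Sum>k\<in>I. \<bar>x k\<bar> powr q) \<le> 1"
  shows "\<bar>\<Sum>k\<in>I. x k * d k\<bar> \<le> (\<Sum>k\<in>I. \<bar>d k\<bar> powr p) powr (1/p)"
proof (cases "(\<Sum>k\<in>I. \<bar>d k\<bar> powr p) = 0")
  case True
  then have "\<forall>k\<in>I. d k = 0"
    using I by (simp add: sum_nonneg_eq_0_iff)
  then show ?thesis
    by simp
next
  case False
  define A where "A = (\<Sum>k\<in>I. \<bar>d k\<bar> powr p)"
  have A: "A > 0"
    using False unfolding A_def by (simp add: sum_nonneg order_neq_le_trans)
  define D where "D = A powr (1/p)"
  have D: "D > 0" "D powr p = A"
    unfolding D_def using A p by (simp_all add: powr_powr)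
  have Young: "\<bar>x k\<bar> * (\<bar>d k\<bar> / D) \<le> \<bar>x k\<bar> powr q / q + \<bar>d k\<bar> powr p / A / p" for k
    using Youngs_inequality[of q p "\<bar>x k\<bar>" "\<bar>d k\<bar> / D"] p q pq D
    by (simp add: add.commute powr_divide)
  have "\<bar>\<Sum>k\<in>I. x k * d k\<bar> \<le> (\<Sum>k\<in>I. \<bar>x k\<bar> * \<bar>d k\<bar>)"
    by (rule order_trans[OF sum_abs]) (simp add: abs_mult)
  also have "\<dots> = D * (\<Sum>k\<in>I. \<bar>x k\<bar> * (\<bar>d k\<bar> / D))"
    using D by (simp add: sum_distrib_left)
  also have "\<dots> \<le> D * (\<Sum>k\<in>I. \<bar>x k\<bar> powr q / q + \<bar>d k\<bar> powr p / A / p)"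
    using D Young by (intro mult_left_mono sum_mono) auto
  also have "\<dots> = D * ((\<Sum>k\<in>I. \<bar>x k\<bar> powr q) / q + 1 / p)"
    using A by (simp add: sum.distrib sum_divide_distrib[symmetric] A_def[symmetric])
  also have "\<dots> \<le> D * (1 / q + 1 / p)"
    using x q D by (intro mult_left_mono add_right_mono divide_right_mono) auto
  finally show ?thesis
    using pq unfolding D_def A_def by (simp add: add.commute)
qed

lemma lp_norm_le_if_dual_bound:
  fixes p B :: real and N :: nat
  assumes p: "p > 1"
    and H: "\<And>x. \<forall>i\<ge>N. x i = 0 \<Longrightarrow> (\<Sum>i<N. \<bar>x i\<bar> powr (p / (p - 1))) \<le> 1 \<Longrightarrow> (\<Sum>i<N. x i * c i) \<le> B"
  shows "(\<Sum>i<N. \<bar>c i\<bar> powr p) powr (1/p) \<le> B"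
proof (cases "(\<Sum>i<N. \<bar>c i\<bar> powr p) = 0")
  case True
  then show ?thesis
    using H[of "\<lambda>i. 0"] by simp
next
  case False
  define A where "A = (\<Sum>i<N. \<bar>c i\<bar> powr p)"
  have A: "A > 0"
    using False unfolding A_def by (simp add: sum_nonneg order_neq_le_trans)
  define x where "x i = (if i < N then sgn (c i) * \<bar>c i\<bar> powr (p - 1) / A powr ((p - 1) / p) else 0)" for i
  have "\<bar>x i\<bar> powr (p / (p - 1)) = \<bar>c i\<bar> powr p / A" if "i < N" for i
    using that A p by (simp add: x_def abs_mult abs_sgn_eq powr_divide powr_powr)
  then have "(\<Sum>i<N. \<bar>x i\<bar> powr (p / (p - 1))) = (\<Sum>i<N. \<bar>c i\<bar> powr p) / A"
    by (simp add: sum_divide_distrib)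
  then have x_unit: "(\<Sum>i<N. \<bar>x i\<bar> powr (p / (p - 1))) \<le> 1"
    using A by (simp add: A_def[symmetric])
  have "x i * c i = \<bar>c i\<bar> powr p / A powr ((p - 1) / p)" if "i < N" for i
  proof -
    have "sgn (c i) * c i = \<bar>c i\<bar>"
      by (simp add: sgn_if)
    then have "sgn (c i) * c i * \<bar>c i\<bar> powr (p - 1) = \<bar>c i\<bar> powr p"
      by (simp add: powr_mult_base)
    then show ?thesis
      using that by (simp add: x_def mult_ac)
  qed
  then have "(\<Sum>i<N. x i * c i) = A powr 1 / A powr ((p - 1) / p)"
    using A by (simp add: sum_divide_distrib[symmetric] A_def[symmetric])
  also have "\<dots> = A powr (1 - (p - 1) / p)"
    by (simp add: powr_diff)
  also have "1 - (p - 1) / p = 1 / p"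
    using p by (simp add: field_simps)
  finally have "(\<Sum>i<N. x i * c i) = A powr (1/p)" .
  moreover have "(\<Sum>i<N. x i * c i) \<le> B"
    by (rule H[OF _ x_unit]) (simp add: x_def)
  ultimately show ?thesis
    unfolding A_def by linarith
qed

lemma l1_norm_le_if_dual_bound:
  fixes c :: "nat \<Rightarrow> real" and N :: nat
  assumes "\<And>x. \<forall>i\<ge>N. x i = 0 \<Longrightarrow> \<forall>i. \<bar>x i\<bar> \<le> 1 \<Longrightarrow> (\<Sum>i<N. x i * c i) \<le> B"
  shows "(\<Sum>i<N. \<bar>c i\<bar>) \<le> B"
proof -
  have "(\<Sum>i<N. \<bar>c i\<bar>) = (\<Sum>i<N. (if i < N then sgn (c i) else 0) * c i)"
    by (rule sum.cong) (auto simp: sgn_if)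
  also have "\<dots> \<le> B"
    by (rule assms) (auto simp: abs_sgn_eq)
  finally show ?thesis .
qed

text \<open>Jensen's inequality for \<open>t \<mapsto> t\<^sup>r\<close> with the weights \<open>\<parallel>u i\<parallel>\<^sub>r / \<Sum>\<^sub>i \<parallel>u i\<parallel>\<^sub>r\<close>.\<close>
lemma Minkowski_sum_powr:
  fixes u :: "'a \<Rightarrow> 'b \<Rightarrow> real"
  assumes r: "r \<ge> 1" and I: "finite I" and J: "finite J" and u: "\<And>i j. u i j \<ge> 0"
  shows "(\<Sum>j\<in>J. (\<Sum>i\<in>I. u i j) powr r) \<le> (\<Sum>i\<in>I. (\<Sum>j\<in>J. u i j powr r) powr (1/r)) powr r"
proof -
  define m where "m i = (\<Sum>j\<in>J. u i j powr r) powr (1/r)" for i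
  define M where "M = (\<Sum>i\<in>I. m i)"
  have m: "m i \<ge> 0" "m i powr r = (\<Sum>j\<in>J. u i j powr r)" for i
    unfolding m_def using r by (simp_all add: powr_powr sum_nonneg)
  have u_zero: "u i j = 0" if "m i = 0" "j \<in> J" for i j
    using m(2)[of i] that J u by (simp add: sum_nonneg_eq_0_iff)
  show ?thesis
  proof (cases "M = 0")
    case True
    then have "m i = 0" if "i \<in> I" for i
      using that I m(1) unfolding M_def by (simp add: sum_nonneg_eq_0_iff)
    then show ?thesis
      using u_zero by simp
  next
    case False
    then have M: "M > 0" "I \<noteq> {}"
      using m(1) unfolding M_def by (auto simp: sum_nonneg order_neq_le_trans)
    define w where "w i = m i / M" for i
    have w: "w i \<ge> 0" for i
      using m(1) M unfolding w_def by simp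
    have "(\<Sum>i\<in>I. w i) = 1"
      using M unfolding w_def M_def by (simp add: sum_divide_distrib[symmetric])
    have Jensen: "(\<Sum>i\<in>I. u i j) powr r \<le> (\<Sum>i\<in>I. w i * (u i j / w i) powr r)" if "j \<in> J" for j
    proof -
      have "w i *\<^sub>R (u i j / w i) = u i j" for i
        using u_zero[of i j] that M unfolding w_def by auto
      then have "(\<Sum>i\<in>I. w i *\<^sub>R (u i j / w i)) = (\<Sum>i\<in>I. u i j)"
        by simp
      moreover have "\<bar>\<Sum>i\<in>I. w i *\<^sub>R (u i j / w i)\<bar> powr r \<le> (\<Sum>i\<in>I. w i * \<bar>u i j / w i\<bar> powr r)"
        by (rule convex_on_sum[OF I M(2) convex_on_abs_powr[OF r] \<open>(\<Sum>i\<in>I. w i) = 1\<close>]) (use w in auto)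
      ultimately show ?thesis
        using u w by (simp add: sum_nonneg)
    qed
    have weighted: "w i * (\<Sum>j\<in>J. (u i j / w i) powr r) = w i * M powr r" for i
    proof (cases "w i = 0")
      case False
      then have "(\<Sum>j\<in>J. (u i j / w i) powr r) = (m i / w i) powr r"
        using u w m(1) by (simp add: powr_divide m(2) sum_divide_distrib)
      also have "m i / w i = M"
        using False M unfolding w_def by simp
      finally show ?thesis
        by simp
    qed simp
    have "(\<Sum>j\<in>J. (\<Sum>i\<in>I. u i j) powr r) \<le> (\<Sum>j\<in>J. \<Sum>i\<in>I. w i * (u i j / w i) powr r)"
      by (rule sum_mono) (rule Jensen)
    also have "\<dots> = (\<Sum>i\<in>I. w i * M powr r)"
      using weighted by (subst sum.swap) (simp add: sum_distrib_left)
    also have "\<dots> = M powr r"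
      using \<open>(\<Sum>i\<in>I. w i) = 1\<close> by (simp add: sum_distrib_right[symmetric])
    finally show ?thesis
      unfolding M_def m_def .
  qed
qed

section \<open>The sequence spaces and bounded bilinear forms\<close>

lemma Xsp_finite_support: "\<forall>i\<ge>N. x i = 0 \<Longrightarrow> x \<in> Xsp q"
proof -
  assume x: "\<forall>i\<ge>N. x i = 0"
  then have "x \<longlonglongrightarrow> 0"
    by (intro tendsto_eventually) (auto simp: eventually_sequentially)
  moreover have "summable (\<lambda>i. \<bar>x i\<bar> powr r)" for r
    by (rule summable_finite[of "{..<N}"]) (use x in auto)
  ultimately show ?thesis
    by (simp add: Xsp_def)
qed

lemma Xnorm_finite_support:
  "q \<noteq> \<infinity> \<Longrightarrow> \<forall>i\<ge>N. x i = 0 \<Longrightarrow>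
    Xnorm q x = (\<Sum>i<N. \<bar>x i\<bar> powr real_of_ereal q) powr (1 / real_of_ereal q)"
  unfolding Xnorm_def by (simp, subst suminf_finite[of "{..<N}"]) auto

lemma Xnorm_infinity_le: "(\<And>i. \<bar>x i\<bar> \<le> c) \<Longrightarrow> Xnorm \<infinity> x \<le> c"
  unfolding Xnorm_def by (simp add: cSUP_least)

lemma Xnorm_zero_le_1: "Xnorm q (\<lambda>i. 0) \<le> 1"
  by (cases "q = \<infinity>") (simp_all add: Xnorm_infinity_le Xnorm_finite_support[of _ 0])

lemma abs_le_Xnorm_infinity:
  assumes "x \<in> Xsp \<infinity>"
  shows "\<bar>x i\<bar> \<le> Xnorm \<infinity> x"
proof -
  have "Bseq x"
    using assms by (intro convergent_imp_Bseq) (auto simp: Xsp_def convergent_def)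
  then have "bdd_above (range (\<lambda>i. \<bar>x i\<bar>))"
    using Bseq_bdd_above'[of x] by simp
  then show ?thesis
    unfolding Xnorm_def using cSUP_upper[OF UNIV_I] by simp
qed

lemma Xsp_sum_powr_le_suminf:
  "q \<noteq> \<infinity> \<Longrightarrow> x \<in> Xsp q \<Longrightarrow> finite I \<Longrightarrow>
    (\<Sum>i\<in>I. \<bar>x i\<bar> powr real_of_ereal q) \<le> (\<Sum>i. \<bar>x i\<bar> powr real_of_ereal q)"
  by (rule sum_le_suminf) (auto simp: Xsp_def)

lemma abs_le_Xnorm:
  assumes "q \<noteq> \<infinity>" "real_of_ereal q > 0" "x \<in> Xsp q"
  shows "\<bar>x i\<bar> \<le> Xnorm q x"
proof -
  define r where "r = real_of_ereal q"
  have "\<bar>x i\<bar> = (\<bar>x i\<bar> powr r) powr (1 / r)"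
    using assms(2) unfolding r_def by (simp add: powr_powr)
  also have "\<dots> \<le> (\<Sum>i. \<bar>x i\<bar> powr r) powr (1 / r)"
    using Xsp_sum_powr_le_suminf[OF assms(1,3), of "{i}"] assms(2) unfolding r_def
    by (intro powr_mono2) auto
  finally show ?thesis
    using assms(1) unfolding Xnorm_def r_def by simp
qed

lemma sum_powr_le_1_if_Xnorm_le_1:
  assumes "q \<noteq> \<infinity>" "real_of_ereal q > 0" "x \<in> Xsp q" "Xnorm q x \<le> 1" "finite I"
  shows "(\<Sum>i\<in>I. \<bar>x i\<bar> powr real_of_ereal q) \<le> 1"
proof -
  define r s where "r = real_of_ereal q" and "s = (\<Sum>i. \<bar>x i\<bar> powr r)"
  have "s \<ge> 0"
    unfolding s_def r_def using assms(1,3) by (intro suminf_nonneg) (auto simp: Xsp_def)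
  then have "s = (s powr (1 / r)) powr r"
    using assms(2) unfolding r_def by (simp add: powr_powr)
  also have "\<dots> \<le> 1"
    using assms(1,2,4) unfolding Xnorm_def s_def r_def by (intro powr_le1) auto
  finally show ?thesis
    using Xsp_sum_powr_le_suminf[OF assms(1,3,5)] unfolding s_def r_def by linarith
qed

lemma pstar_1 [simp]: "pstar 1 = \<infinity>"
  by (simp add: pstar_def)

lemma conj_exp_pstar: "1 \<le> p \<Longrightarrow> conj_exp (pstar p) = p"
  by (auto simp: pstar_def conj_exp_def field_simps)

lemma abs_le_Xnorm_pstar:
  assumes "1 \<le> p" "x \<in> Xsp (pstar p)"
  shows "\<bar>x i\<bar> \<le> Xnorm (pstar p) x"
  using assms abs_le_Xnorm_infinity[of x i] abs_le_Xnorm[of "pstar p" x i]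
  by (cases "p = 1") (auto simp: pstar_def)

lemma Xnorm_nonneg: "x \<in> Xsp q \<Longrightarrow> Xnorm q x \<ge> 0"
  using abs_le_Xnorm_infinity[of x 0] by (cases "q = \<infinity>") (auto simp: Xnorm_def)

lemma ecan_in_Xsp: "ecan k \<in> Xsp q"
  by (rule Xsp_finite_support[of "Suc k"]) (simp add: ecan_def)

lemma sum_ecan_in_Xsp: "(\<lambda>i. \<Sum>k<N. c k * ecan k i) \<in> Xsp q"
  by (rule Xsp_finite_support[of N]) (simp add: ecan_def)

lemma finite_support_eq_sum_ecan: "\<forall>i\<ge>N. x i = 0 \<Longrightarrow> x = (\<lambda>i. \<Sum>k<N. x k * ecan k i)"
proof
  fix i
  assume "\<forall>i\<ge>N. x i = 0"
  moreover have "(\<Sum>k<N. x k * ecan k i) = (if i < N then x i else 0)"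
    by (simp add: ecan_def if_distrib[of "(*) _"] cong: if_cong)
  ultimately show "x i = (\<Sum>k<N. x k * ecan k i)"
    by (simp add: not_less)
qed

lemma bilinear_on_swap: "bilinear_on X Y T \<Longrightarrow> bilinear_on Y X (\<lambda>y x. T x y)"
  by (simp add: bilinear_on_def)

lemma bilinear_on_sum_ecan_left:
  assumes T: "bilinear_on (Xsp q) Y T" and y: "y \<in> Y"
  shows "T (\<lambda>i. \<Sum>k<N. c k * ecan k i) y = (\<Sum>k<N. c k * T (ecan k) y)"
proof (induction N)
  case 0
  have "T (\<lambda>i. 0 * ecan 0 i) y = 0 * T (ecan 0) y"
    using T y ecan_in_Xsp unfolding bilinear_on_def by blast
  then show ?case
    by simp
next
  case (Suc N)
  have "T (\<lambda>i. (\<Sum>k<N. c k * ecan k i) + c N * ecan N i) y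
      = T (\<lambda>i. \<Sum>k<N. c k * ecan k i) y + T (\<lambda>i. c N * ecan N i) y"
    using T y sum_ecan_in_Xsp[of c N] Xsp_finite_support[of "Suc N" "\<lambda>i. c N * ecan N i" q]
    unfolding bilinear_on_def by (auto simp: ecan_def)
  moreover have "T (\<lambda>i. c N * ecan N i) y = c N * T (ecan N) y"
    using T y ecan_in_Xsp unfolding bilinear_on_def by blast
  ultimately show ?case
    using Suc by simp
qed

lemma bilinear_on_sum_ecan_right:
  "bilinear_on X (Xsp q) T \<Longrightarrow> x \<in> X \<Longrightarrow>
    T x (\<lambda>i. \<Sum>k<N. c k * ecan k i) = (\<Sum>k<N. c k * T x (ecan k))"
  using bilinear_on_sum_ecan_left[OF bilinear_on_swap] .

lemma bnorm_upper:
  assumes "cont_bilinear q T" "x \<in> Xsp q" "y \<in> Xsp \<infinity>" "Xnorm q x \<le> 1" "Xnorm \<infinity> y \<le> 1"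
  shows "\<bar>T x y\<bar> \<le> bnorm q T"
proof -
  define B where "B = {(x, y). x \<in> Xsp q \<and> y \<in> Xsp \<infinity> \<and> Xnorm q x \<le> 1 \<and> Xnorm \<infinity> y \<le> 1}"
  obtain C where C: "\<forall>x\<in>Xsp q. \<forall>y\<in>Xsp \<infinity>. \<bar>T x y\<bar> \<le> C * Xnorm q x * Xnorm \<infinity> y"
    using assms(1) unfolding cont_bilinear_def by blast
  have "\<bar>T (fst xy) (snd xy)\<bar> \<le> \<bar>C\<bar>" if "xy \<in> B" for xy
  proof -
    obtain x' y' where xy: "xy = (x', y')" "x' \<in> Xsp q" "y' \<in> Xsp \<infinity>" "Xnorm q x' \<le> 1" "Xnorm \<infinity> y' \<le> 1"
      using \<open>xy \<in> B\<close> unfolding B_def by auto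
    have norms: "0 \<le> Xnorm q x'" "0 \<le> Xnorm \<infinity> y'"
      using xy Xnorm_nonneg by auto
    have "\<bar>T x' y'\<bar> \<le> C * (Xnorm q x' * Xnorm \<infinity> y')"
      using C xy by (simp add: mult.assoc)
    also have "\<dots> \<le> \<bar>C\<bar> * (Xnorm q x' * Xnorm \<infinity> y')"
      using norms by (intro mult_right_mono) auto
    also have "\<dots> \<le> \<bar>C\<bar> * 1"
      using norms xy by (intro mult_left_mono mult_le_one) auto
    finally show ?thesis
      using xy by simp
  qed
  then have bdd: "bdd_above ((\<lambda>xy. \<bar>T (fst xy) (snd xy)\<bar>) ` B)"
    by (intro bdd_aboveI2)
  have "\<bar>T (fst (x, y)) (snd (x, y))\<bar> \<le> bnorm q T"
    unfolding bnorm_def B_def[symmetric] by (rule cSUP_upper[OF _ bdd]) (use assms in \<open>simp add: B_def\<close>)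
  then show ?thesis
    by simp
qed

lemma bnorm_nonneg:
  assumes "cont_bilinear q T"
  shows "bnorm q T \<ge> 0"
proof -
  have "\<bar>T (\<lambda>i. 0) (\<lambda>i. 0)\<bar> \<le> bnorm q T"
    using assms by (rule bnorm_upper) (auto intro: Xsp_finite_support[of 0] Xnorm_zero_le_1)
  then show ?thesis
    by linarith
qed

lemma row_lp_norm_le_bnorm:
  assumes p: "1 \<le> p" and T: "cont_bilinear (pstar p) T" and y: "y \<in> Xsp \<infinity>" "Xnorm \<infinity> y \<le> 1"
  shows "(\<Sum>i<N. \<bar>T (ecan i) y\<bar> powr p) powr (1/p) \<le> bnorm (pstar p) T"
proof -
  have pairing: "(\<Sum>i<N. x i * T (ecan i) y) \<le> bnorm (pstar p) T"
    if x: "\<forall>i\<ge>N. x i = 0" "Xnorm (pstar p) x \<le> 1" for x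
  proof -
    have "T x y = T (\<lambda>i. \<Sum>k<N. x k * ecan k i) y"
      using finite_support_eq_sum_ecan[OF x(1)] by (rule arg_cong)
    also have "\<dots> = (\<Sum>i<N. x i * T (ecan i) y)"
      using T y unfolding cont_bilinear_def by (intro bilinear_on_sum_ecan_left) auto
    finally show ?thesis
      using bnorm_upper[OF T Xsp_finite_support[OF x(1)] y(1) x(2) y(2)] by linarith
  qed
  show ?thesis
  proof (cases "p = 1")
    case True
    have "(\<Sum>i<N. \<bar>T (ecan i) y\<bar>) \<le> bnorm (pstar p) T"
    proof (rule l1_norm_le_if_dual_bound)
      fix x :: "nat \<Rightarrow> real"
      assume "\<forall>i\<ge>N. x i = 0" "\<forall>i. \<bar>x i\<bar> \<le> 1"
      then show "(\<Sum>i<N. x i * T (ecan i) y) \<le> bnorm (pstar p) T"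
        using True by (intro pairing) (auto intro: Xnorm_infinity_le)
    qed
    then show ?thesis
      using True by simp
  next
    case False
    with p have p1: "p > 1"
      by simp
    show ?thesis
    proof (rule lp_norm_le_if_dual_bound[OF p1])
      fix x :: "nat \<Rightarrow> real"
      assume x: "\<forall>i\<ge>N. x i = 0" "(\<Sum>i<N. \<bar>x i\<bar> powr (p / (p - 1))) \<le> 1"
      have "Xnorm (pstar p) x = (\<Sum>i<N. \<bar>x i\<bar> powr (p / (p - 1))) powr (1 / (p / (p - 1)))"
        using Xnorm_finite_support[OF _ x(1), of "pstar p"] False by (simp add: pstar_def)
      also have "\<dots> \<le> 1"
        using x p1 by (intro powr_le1) (auto simp: sum_nonneg)
      finally show "(\<Sum>i<N. x i * T (ecan i) y) \<le> bnorm (pstar p) T"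
        by (rule pairing[OF x(1)])
    qed
  qed
qed

definition matrix_form :: "nat \<Rightarrow> nat \<Rightarrow> (nat \<Rightarrow> nat \<Rightarrow> real) \<Rightarrow> (nat \<Rightarrow> real) \<Rightarrow> (nat \<Rightarrow> real) \<Rightarrow> real" where
  "matrix_form K n c x y = (\<Sum>k<K. \<Sum>j<n. c k j * x k * y j)"

lemma matrix_form_ecan: "matrix_form K n c (ecan i) (ecan j) = (if i < K \<and> j < n then c i j else 0)"
  by (auto simp: matrix_form_def ecan_def if_distrib[of "(*) _"] if_distrib[of "\<lambda>x. x * _"] cong: if_cong)

lemma cont_bilinear_matrix_form:
  assumes p: "1 \<le> p"
  shows "cont_bilinear (pstar p) (matrix_form K n c)"
proof -
  have "bilinear_on (Xsp (pstar p)) (Xsp \<infinity>) (matrix_form K n c)"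
    unfolding bilinear_on_def matrix_form_def
    by (simp add: distrib_right distrib_left sum.distrib sum_distrib_left mult_ac)
  moreover have "\<bar>matrix_form K n c x y\<bar> \<le> (\<Sum>k<K. \<Sum>j<n. \<bar>c k j\<bar>) * Xnorm (pstar p) x * Xnorm \<infinity> y"
    if x: "x \<in> Xsp (pstar p)" and y: "y \<in> Xsp \<infinity>" for x y
  proof -
    have "\<bar>c k j * x k * y j\<bar> \<le> \<bar>c k j\<bar> * Xnorm (pstar p) x * Xnorm \<infinity> y" for k j
      using abs_le_Xnorm_pstar[OF p x, of k] abs_le_Xnorm_infinity[OF y, of j]
      by (simp add: abs_mult mult.assoc mult_left_mono mult_mono)
    then have "\<bar>matrix_form K n c x y\<bar> \<le> (\<Sum>k<K. \<Sum>j<n. \<bar>c k j\<bar> * Xnorm (pstar p) x * Xnorm \<infinity> y)"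
      unfolding matrix_form_def by (intro order_trans[OF sum_abs] sum_mono order_trans[OF sum_abs]) auto
    then show ?thesis
      by (simp add: sum_distrib_right)
  qed
  ultimately show ?thesis
    unfolding cont_bilinear_def by blast
qed

lemma mixed_sum_trunc_matrix_form:
  assumes p: "1 \<le> p" and "K \<le> N" "n \<le> N"
  shows "mixed_sum_trunc (pstar p) (matrix_form K n c) N
    = (\<Sum>j<n. (\<Sum>k<K. \<bar>c k j\<bar> powr p) powr (2 / p)) powr (1/2)"
proof -
  have restrict: "(\<Sum>i<N. if i < M then f i else 0) = (\<Sum>i<M. f i)" if "M \<le> N" for M and f :: "nat \<Rightarrow> real"
  proof -
    have "{..<N} \<inter> {i. i < M} = {..<M}"
      using that by auto
    then show ?thesis
      by (simp add: sum.If_cases)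
  qed
  have "(\<Sum>i<N. if i < K \<and> j < n then \<bar>c i j\<bar> powr p else 0)
      = (if j < n then \<Sum>k<K. \<bar>c k j\<bar> powr p else 0)" for j
    using restrict[OF \<open>K \<le> N\<close>] by simp
  then have "(\<Sum>j<N. (\<Sum>i<N. if i < K \<and> j < n then \<bar>c i j\<bar> powr p else 0) powr (2 / p))
      = (\<Sum>j<N. if j < n then (\<Sum>k<K. \<bar>c k j\<bar> powr p) powr (2 / p) else 0)"
    by (intro sum.cong) auto
  also have "\<dots> = (\<Sum>j<n. (\<Sum>k<K. \<bar>c k j\<bar> powr p) powr (2 / p))"
    by (rule restrict[OF \<open>n \<le> N\<close>])
  finally show ?thesis
    unfolding mixed_sum_trunc_def conj_exp_pstar[OF p] matrix_form_ecan
    by (simp add: if_distrib[of "\<lambda>x. \<bar>x\<bar> powr _"] cong: if_cong)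
qed

lemma bnorm_matrix_form_le:
  assumes p: "1 \<le> p"
    and B: "\<And>y. \<forall>j<n. \<bar>y j\<bar> \<le> 1 \<Longrightarrow> (\<Sum>k<K. \<bar>\<Sum>j<n. c k j * y j\<bar> powr p) powr (1/p) \<le> B"
  shows "bnorm (pstar p) (matrix_form K n c) \<le> B"
  unfolding bnorm_def
proof (rule cSUP_least)
  show "{(x, y). x \<in> Xsp (pstar p) \<and> y \<in> Xsp \<infinity> \<and> Xnorm (pstar p) x \<le> 1 \<and> Xnorm \<infinity> y \<le> 1} \<noteq> {}"
    using Xsp_finite_support[of 0 "\<lambda>i. 0"] Xnorm_zero_le_1 by blast
next
  fix xy
  assume "xy \<in> {(x, y). x \<in> Xsp (pstar p) \<and> y \<in> Xsp \<infinity> \<and> Xnorm (pstar p) x \<le> 1 \<and> Xnorm \<infinity> y \<le> 1}"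
  then obtain x y where xy: "xy = (x, y)" "x \<in> Xsp (pstar p)" "y \<in> Xsp \<infinity>" "Xnorm (pstar p) x \<le> 1" "Xnorm \<infinity> y \<le> 1"
    by auto
  define d where "d k = (\<Sum>j<n. c k j * y j)" for k
  have "matrix_form K n c x y = (\<Sum>k<K. x k * d k)"
    unfolding matrix_form_def d_def by (simp add: sum_distrib_left mult_ac)
  moreover have "\<bar>\<Sum>k<K. x k * d k\<bar> \<le> (\<Sum>k<K. \<bar>d k\<bar> powr p) powr (1/p)"
  proof (cases "p = 1")
    case True
    then have "\<bar>x k\<bar> \<le> 1" for k
      using abs_le_Xnorm_infinity[of x k] xy(2,4) by simp
    then have "\<bar>\<Sum>k<K. x k * d k\<bar> \<le> (\<Sum>k<K. \<bar>d k\<bar>)"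
      by (intro order_trans[OF sum_abs] sum_mono) (simp add: abs_mult mult_left_le_one_le)
    then show ?thesis
      using True by simp
  next
    case False
    with p have p1: "p > 1"
      by simp
    have q: "pstar p \<noteq> \<infinity>" "real_of_ereal (pstar p) = p / (p - 1)"
      using p1 by (simp_all add: pstar_def)
    have "(\<Sum>k<K. \<bar>x k\<bar> powr (p / (p - 1))) \<le> 1"
      using sum_powr_le_1_if_Xnorm_le_1[OF q(1) _ xy(2) xy(4), of "{..<K}"] q(2) p1 by simp
    then show ?thesis
      using p1 by (intro Holder_sum_le[OF p1]) (auto simp: field_simps)
  qed
  moreover have "(\<Sum>k<K. \<bar>d k\<bar> powr p) powr (1/p) \<le> B"
    unfolding d_def using abs_le_Xnorm_infinity[OF xy(3)] xy(5) by (intro B) (auto intro: order_trans)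
  ultimately show "\<bar>matrix_form K n c (fst xy) (snd xy)\<bar> \<le> B"
    using xy(1) by simp
qed

section \<open>Admissible constants\<close>

definition D_admissible :: "ereal \<Rightarrow> real \<Rightarrow> bool" where
  "D_admissible q D \<longleftrightarrow> (\<forall>T. cont_bilinear q T \<longrightarrow> (\<forall>N. mixed_sum_trunc q T N \<le> D * bnorm q T))"

lemma D_const_eq_Inf: "D_const q = Inf (Collect (D_admissible q))"
  unfolding D_const_def D_admissible_def ..

text \<open>Testing \<open>T\<close> against the sign vectors \<open>y\<close> bounds the \<open>p\<close>-norm of each vector
  \<open>(\<Sum>\<^sub>j T(e\<^sub>i, e\<^sub>j) y\<^sub>j)\<^sub>i\<close> by \<open>\<parallel>T\<parallel>\<close>; averaging over \<open>y\<close> and Khintchine's inequality give the claim.\<close>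
lemma sum_row_l2_powr_le_bnorm:
  assumes p: "1 \<le> p" and T: "cont_bilinear (pstar p) T"
  shows "(\<Sum>i<N. (\<Sum>j<N. (T (ecan i) (ecan j))\<^sup>2) powr (p / 2)) \<le> sqrt 3 powr p * bnorm (pstar p) T powr p"
proof -
  define t where "t i j = T (ecan i) (ecan j)" for i j
  define B where "B = bnorm (pstar p) T"
  have rows: "(\<Sum>i<N. \<bar>\<Sum>j<N. t i j * sign_vec k j\<bar> powr p) \<le> B powr p" for k
  proof -
    define y where "y j = (\<Sum>j'<N. sign_vec k j' * ecan j' j)" for j
    have "y \<in> Xsp \<infinity>"
      unfolding y_def[abs_def] by (rule sum_ecan_in_Xsp)
    moreover have "Xnorm \<infinity> y \<le> 1"
      by (rule Xnorm_infinity_le) (simp add: y_def ecan_def if_distrib[of "(*) _"] cong: if_cong)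
    ultimately have y: "y \<in> Xsp \<infinity>" "Xnorm \<infinity> y \<le> 1" .
    have "T (ecan i) y = (\<Sum>j<N. t i j * sign_vec k j)" for i
      using T ecan_in_Xsp unfolding cont_bilinear_def y_def t_def
      by (subst bilinear_on_sum_ecan_right) (auto simp: mult.commute)
    then have "(\<Sum>i<N. \<bar>\<Sum>j<N. t i j * sign_vec k j\<bar> powr p) powr (1/p) \<le> B"
      using row_lp_norm_le_bnorm[OF p T y] unfolding B_def by simp
    then have "((\<Sum>i<N. \<bar>\<Sum>j<N. t i j * sign_vec k j\<bar> powr p) powr (1/p)) powr p \<le> B powr p"
      using p by (intro powr_mono2) auto
    then show ?thesis
      using p by (simp add: powr_powr sum_nonneg)
  qed
  have "(\<Sum>i<N. (\<Sum>j<N. (t i j)\<^sup>2) powr (p / 2))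
      \<le> (\<Sum>i<N. sqrt 3 powr p * sign_avg N (\<lambda>e. \<bar>\<Sum>j<N. t i j * e j\<bar> powr p))"
    by (intro sum_mono khintchine_Lp p)
  also have "\<dots> = sqrt 3 powr p * sign_avg N (\<lambda>e. \<Sum>i<N. \<bar>\<Sum>j<N. t i j * e j\<bar> powr p)"
    by (simp add: sign_avg_sum sum_distrib_left)
  also have "\<dots> \<le> sqrt 3 powr p * B powr p"
    using sign_avg_mono[of "\<lambda>e. \<Sum>i<N. \<bar>\<Sum>j<N. t i j * e j\<bar> powr p" "\<lambda>e. B powr p", OF rows]
    by (intro mult_left_mono) (auto simp: sign_avg_const)
  finally show ?thesis
    unfolding t_def B_def .
qed

lemma D_admissible_sqrt3:
  assumes p: "1 \<le> p" "p \<le> 2"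
  shows "D_admissible (pstar p) (sqrt 3)"
  unfolding D_admissible_def
proof (intro allI impI)
  fix T N
  assume T: "cont_bilinear (pstar p) T"
  define t where "t i j = T (ecan i) (ecan j)" for i j
  define M where "M = (\<Sum>i<N. (\<Sum>j<N. (t i j)\<^sup>2) powr (p / 2))"
  have M: "M \<ge> 0" "M \<le> sqrt 3 powr p * bnorm (pstar p) T powr p"
    unfolding M_def t_def using sum_row_l2_powr_le_bnorm[OF p(1) T] by (auto simp: sum_nonneg)
  have "(\<Sum>j<N. (\<Sum>i<N. \<bar>t i j\<bar> powr p) powr (2 / p))
      \<le> (\<Sum>i<N. (\<Sum>j<N. (\<bar>t i j\<bar> powr p) powr (2 / p)) powr (1 / (2 / p))) powr (2 / p)"
    using p by (intro Minkowski_sum_powr) auto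
  also have "\<dots> = M powr (2 / p)"
    using p by (simp add: M_def powr_powr)
  finally have "(\<Sum>j<N. (\<Sum>i<N. \<bar>t i j\<bar> powr p) powr (2 / p)) \<le> M powr (2 / p)" .
  then have "mixed_sum_trunc (pstar p) T N \<le> (M powr (2 / p)) powr (1/2)"
    unfolding mixed_sum_trunc_def conj_exp_pstar[OF p(1)] t_def by (intro powr_mono2) (auto simp: sum_nonneg)
  also have "\<dots> = M powr (1 / p)"
    using M by (simp add: powr_powr)
  also have "\<dots> \<le> (sqrt 3 powr p * bnorm (pstar p) T powr p) powr (1 / p)"
    using M p by (intro powr_mono2) auto
  also have "\<dots> = sqrt 3 * bnorm (pstar p) T"
    using p bnorm_nonneg[OF T] by (simp add: powr_mult powr_powr)
  finally show "mixed_sum_trunc (pstar p) T N \<le> sqrt 3 * bnorm (pstar p) T" .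
qed

lemma abs_powr_two_pow_scale:
  fixes p x :: real
  assumes "p \<ge> 1"
  shows "\<bar>(2 ^ n) powr (-1/p) * x\<bar> powr p = \<bar>x\<bar> powr p / 2 ^ n"
proof -
  have "\<bar>(2 ^ n) powr (-1/p) * x\<bar> powr p = ((2 ^ n) powr (-1/p)) powr p * \<bar>x\<bar> powr p"
    by (simp add: abs_mult powr_mult)
  also have "((2 ^ n) powr (-1/p)) powr p = (2 ^ n) powr (-1/p * p)"
    by (rule powr_powr)
  also have "-1/p * p = -1"
    using assms by simp
  also have "(2 ^ n) powr -1 = 1 / (2::real) ^ n"
    by (simp add: powr_minus_divide)
  finally show ?thesis
    by simp
qed

definition rademacher_form :: "real \<Rightarrow> nat \<Rightarrow> (nat \<Rightarrow> real) \<Rightarrow> (nat \<Rightarrow> real) \<Rightarrow> (nat \<Rightarrow> real) \<Rightarrow> real" where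
  "rademacher_form p n b = matrix_form (2 ^ n) n (\<lambda>k j. (2 ^ n) powr (-1/p) * b j * sign_vec k j)"

lemma mixed_sum_trunc_rademacher_form:
  assumes p: "1 \<le> p"
  shows "mixed_sum_trunc (pstar p) (rademacher_form p n b) (2 ^ n + n) = sqrt (\<Sum>j<n. (b j)\<^sup>2)"
proof -
  have "(\<Sum>k<(2::nat) ^ n. \<bar>(2 ^ n) powr (-1/p) * b j * sign_vec k j\<bar> powr p) = \<bar>b j\<bar> powr p" for j
    using abs_powr_two_pow_scale[OF p, of n "b j * sign_vec _ j"] by (simp add: abs_mult mult.assoc)
  moreover have "(\<bar>b j\<bar> powr p) powr (2 / p) = (b j)\<^sup>2" for j
    using p by (simp add: powr_powr)
  ultimately show ?thesis
    unfolding rademacher_form_def using p by (simp add: mixed_sum_trunc_matrix_form powr_half_sqrt sum_nonneg)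
qed

lemma bnorm_rademacher_form_le:
  assumes p: "1 \<le> p"
  shows "bnorm (pstar p) (rademacher_form p n b) \<le> sign_avg n (\<lambda>e. \<bar>\<Sum>j<n. b j * e j\<bar> powr p) powr (1/p)"
  unfolding rademacher_form_def
proof (rule bnorm_matrix_form_le[OF p])
  fix y :: "nat \<Rightarrow> real"
  assume y: "\<forall>j<n. \<bar>y j\<bar> \<le> 1"
  have "(\<Sum>j<n. (2 ^ n) powr (-1/p) * b j * sign_vec k j * y j)
      = (2 ^ n) powr (-1/p) * (0 + (\<Sum>j<n. b j * y j * sign_vec k j))" for k
    by (simp add: sum_distrib_left mult_ac)
  then have "(\<Sum>k<(2::nat) ^ n. \<bar>\<Sum>j<n. (2 ^ n) powr (-1/p) * b j * sign_vec k j * y j\<bar> powr p)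
      = sign_avg n (\<lambda>e. \<bar>0 + (\<Sum>j<n. b j * y j * e j)\<bar> powr p)"
    by (simp only: abs_powr_two_pow_scale[OF p] sign_avg_def sum_divide_distrib)
  also have "\<dots> \<le> sign_avg n (\<lambda>e. \<bar>0 + (\<Sum>j<n. b j * e j)\<bar> powr p)"
    by (rule sign_avg_contraction[OF convex_on_abs_powr[OF p] y])
  finally show "(\<Sum>k<2 ^ n. \<bar>\<Sum>j<n. (2 ^ n) powr (-1/p) * b j * sign_vec k j * y j\<bar> powr p) powr (1/p)
      \<le> sign_avg n (\<lambda>e. \<bar>\<Sum>j<n. b j * e j\<bar> powr p) powr (1/p)"
    using p by (intro powr_mono2) (auto simp: sum_nonneg)
qed

lemma sqrt_sum_square_le_D_admissible:
  assumes p: "1 \<le> p" and D: "D_admissible (pstar p) D"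
  shows "sqrt (\<Sum>j<n. (b j)\<^sup>2) \<le> D * bnorm (pstar p) (rademacher_form p n b)"
proof -
  have "cont_bilinear (pstar p) (rademacher_form p n b)"
    unfolding rademacher_form_def by (rule cont_bilinear_matrix_form[OF p])
  then have "mixed_sum_trunc (pstar p) (rademacher_form p n b) (2 ^ n + n) \<le> D * bnorm (pstar p) (rademacher_form p n b)"
    using D unfolding D_admissible_def by blast
  then show ?thesis
    by (simp only: mixed_sum_trunc_rademacher_form[OF p])
qed

lemma D_admissible_nonneg:
  assumes p: "1 \<le> p" and D: "D_admissible (pstar p) D"
  shows "D \<ge> 0"
proof -
  have "1 \<le> D * bnorm (pstar p) (rademacher_form p 1 (\<lambda>j. 1))"
    using sqrt_sum_square_le_D_admissible[OF p D, where n=1 and b="\<lambda>j. 1"] by simp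
  moreover have "bnorm (pstar p) (rademacher_form p 1 (\<lambda>j. 1)) \<ge> 0"
    unfolding rademacher_form_def by (intro bnorm_nonneg cont_bilinear_matrix_form p)
  ultimately show ?thesis
    using mult_nonpos_nonneg[of D] by fastforce
qed

lemma le_cInf_mult:
  fixes S :: "real set"
  assumes "S \<noteq> {}" "K \<ge> 0" "\<And>D. D \<in> S \<Longrightarrow> s \<le> D * K"
  shows "s \<le> Inf S * K"
proof (cases "K = 0")
  case True
  then show ?thesis
    using assms by fastforce
next
  case False
  with assms have "s / K \<le> Inf S"
    by (intro cInf_greatest) (auto simp: divide_le_eq)
  with False assms(2) show ?thesis
    by (simp add: divide_le_eq)
qed

lemma sqrt_sum_square_le_D_const:
  assumes p: "1 \<le> p" "p \<le> 2"
  shows "sqrt (\<Sum>j<n. (b j)\<^sup>2) \<le> D_const (pstar p) * sign_avg n (\<lambda>e. \<bar>\<Sum>j<n. b j * e j\<bar> powr p) powr (1/p)"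
  unfolding D_const_eq_Inf
proof (rule le_cInf_mult)
  show "Collect (D_admissible (pstar p)) \<noteq> {}"
    using D_admissible_sqrt3[OF p] by blast
next
  fix D
  assume "D \<in> Collect (D_admissible (pstar p))"
  then have D: "D_admissible (pstar p) D"
    by simp
  show "sqrt (\<Sum>j<n. (b j)\<^sup>2) \<le> D * sign_avg n (\<lambda>e. \<bar>\<Sum>j<n. b j * e j\<bar> powr p) powr (1/p)"
    using sqrt_sum_square_le_D_admissible[OF p(1) D]
      mult_left_mono[OF bnorm_rademacher_form_le[OF p(1)] D_admissible_nonneg[OF p(1) D]]
    by (rule order_trans)
qed simp

lemma khintchine_admissible_nonneg:
  assumes "\<forall>(n::nat) (a::nat \<Rightarrow> real). (\<Sum>j=1..n. \<bar>a j\<bar>^2) powr (1/2)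
    \<le> A * (integral {0..1} (\<lambda>t. \<bar>\<Sum>j=1..n. a j * rademacher j t\<bar> powr r)) powr (1/r)"
  shows "0 \<le> A"
proof -
  have "1 \<le> A * (integral {0..1} (\<lambda>t. \<bar>rademacher 1 t\<bar> powr r)) powr (1/r)"
    using assms[rule_format, where n=1 and a="\<lambda>j. 1"] by simp
  moreover have "(integral {0..1} (\<lambda>t. \<bar>rademacher 1 t\<bar> powr r)) powr (1/r) \<ge> 0"
    by simp
  ultimately show ?thesis
    using mult_nonpos_nonneg[of A] by fastforce
qed

theorem theorem2p4:
  fixes p :: real
  assumes "1 \<le> p" and "p \<le> 2"
  shows "(\<forall>(n::nat) (a::nat \<Rightarrow> real).
            (\<Sum>j=1..n. \<bar>a j\<bar>^2) powr (1/2)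
              \<le> D_const (pstar p) *
                 (integral {0..1} (\<lambda>t. \<bar>\<Sum>j=1..n. a j * rademacher j t\<bar> powr p)) powr (1/p))
         \<and> khintchine_A p \<le> D_const (pstar p)"
proof -
  have khintchine: "\<forall>(n::nat) (a::nat \<Rightarrow> real).
            (\<Sum>j=1..n. \<bar>a j\<bar>^2) powr (1/2)
              \<le> D_const (pstar p) *
                 (integral {0..1} (\<lambda>t. \<bar>\<Sum>j=1..n. a j * rademacher j t\<bar> powr p)) powr (1/p)"
  proof (intro allI)
    fix n :: nat and a :: "nat \<Rightarrow> real"
    have "(\<Sum>j=1..n. \<bar>a j\<bar>^2) powr (1/2) = sqrt (\<Sum>j<n. (a (Suc j))\<^sup>2)"
      using sum.atLeast1_atMost_eq[of "\<lambda>j. \<bar>a j\<bar>^2" n] by (simp add: powr_half_sqrt sum_nonneg)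
    also have "\<dots> \<le> D_const (pstar p) * sign_avg n (\<lambda>e. \<bar>\<Sum>j<n. a (Suc j) * e j\<bar> powr p) powr (1/p)"
      by (rule sqrt_sum_square_le_D_const[OF assms])
    also have "sign_avg n (\<lambda>e. \<bar>\<Sum>j<n. a (Suc j) * e j\<bar> powr p)
        = integral {0..1} (\<lambda>t. \<bar>\<Sum>j=1..n. a j * rademacher j t\<bar> powr p)"
      by (rule integral_rademacher_sum_powr[symmetric])
    finally show "(\<Sum>j=1..n. \<bar>a j\<bar>^2) powr (1/2)
        \<le> D_const (pstar p) * (integral {0..1} (\<lambda>t. \<bar>\<Sum>j=1..n. a j * rademacher j t\<bar> powr p)) powr (1/p)" .
  qed
  moreover have "khintchine_A p \<le> D_const (pstar p)"
    unfolding khintchine_A_def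
  proof (rule cInf_lower)
    show "bdd_below {A. \<forall>(n::nat) (a::nat \<Rightarrow> real). (\<Sum>j=1..n. \<bar>a j\<bar>^2) powr (1/2)
        \<le> A * (integral {0..1} (\<lambda>t. \<bar>\<Sum>j=1..n. a j * rademacher j t\<bar> powr p)) powr (1/p)}"
      by (rule bdd_belowI, erule CollectE, erule khintchine_admissible_nonneg)
  qed (intro CollectI khintchine)
  ultimately show ?thesis ..
qed

end
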